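(* Let $G$ be a simple graph on vertex set $\{1,\dots,n\}$. The lexicographic algorithm (Algorithm 1) applied to $G$ returns "failure" if and only if $G$ is not twin-free; and if $G$ is twin-free, the set $C_n$ it returns is an identifying code of $G$.
   Context: Vertices of $G$ are identified with the integers $1,\dots,n$ and ordered by the usual order. For a vertex $v$, $N(v)=\{v\}\cup\{w : vw\in E(G)\}$ is its closed neighbourhood. A set $C\subseteq V(G)$ is an identifying code if the sets $N(v)\cap C$, $v\in V(G)$, are all nonempty and pairwise distinct. $G$ is twin-free if $N(v)\neq N(w)$ for all distinct vertices $v,w$. The lexicographic algorithm (Algorithm 1): set $C_0=\emptyset$. For $j=1,2,\dots,n$ in turn: (i) if $N(j)\cap C_{j-1}=\emptyset$, set $C_j=C_{j-1}\cup\{\min N(j)\}$; (ii) otherwise, if there exists $k\in\{1,\dots,j-1\}$ with $N(k)\cap C_{j-1}=N(j)\cap C_{j-1}$, let $k$ be the least such index; if $N(j)\neq N(k)$ set $C_j=C_{j-1}\cup\{\min(N(j)\triangle N(k))\}$, while if $N(j)=N(k)$ the algorithm stops immediately and returns "failure"; (iii) otherwise set $C_j=C_{j-1}$. If the algorithm never fails, it returns $C_n$. Here $\triangle$ denotes symmetric difference. *)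

theory Defs
  imports Main
begin

text \<open>A simple graph on vertex set {1..n} is given by a symmetric irreflexive
  adjacency relation E on nat; only vertices in {1..n} are considered.\<close>

definition simple_graph :: "(nat \<Rightarrow> nat \<Rightarrow> bool) \<Rightarrow> bool" where
  "simple_graph E \<longleftrightarrow> (\<forall>v w. E v w \<longrightarrow> E w v) \<and> (\<forall>v. \<not> E v v)"

definition cnbh :: "(nat \<Rightarrow> nat \<Rightarrow> bool) \<Rightarrow> nat \<Rightarrow> nat \<Rightarrow> nat set" where
  "cnbh E n v = {v} \<union> {w \<in> {1..n}. E v w}"

definition twin_free :: "(nat \<Rightarrow> nat \<Rightarrow> bool) \<Rightarrow> nat \<Rightarrow> bool" where
  "twin_free E n \<longleftrightarrow> (\<forall>v\<in>{1..n}. \<forall>w\<in>{1..n}. v \<noteq> w \<longrightarrow> cnbh E n v \<noteq> cnbh E n w)"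

definition identifying_code :: "(nat \<Rightarrow> nat \<Rightarrow> bool) \<Rightarrow> nat \<Rightarrow> nat set \<Rightarrow> bool" where
  "identifying_code E n C \<longleftrightarrow> C \<subseteq> {1..n} \<and>
     (\<forall>v\<in>{1..n}. cnbh E n v \<inter> C \<noteq> {}) \<and>
     (\<forall>v\<in>{1..n}. \<forall>w\<in>{1..n}. v \<noteq> w \<longrightarrow> cnbh E n v \<inter> C \<noteq> cnbh E n w \<inter> C)"

text \<open>One step j of Algorithm 1 applied to the current set C = C_{j-1};
  None encodes "failure".\<close>
definition lex_step :: "(nat \<Rightarrow> nat \<Rightarrow> bool) \<Rightarrow> nat \<Rightarrow> nat \<Rightarrow> nat set \<Rightarrow> nat set option" where
  "lex_step E n j C =
     (if cnbh E n j \<inter> C = {} then Some (C \<union> {Min (cnbh E n j)})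
      else if \<exists>k\<in>{1..<j}. cnbh E n k \<inter> C = cnbh E n j \<inter> C then
        (let k = (LEAST k. k \<in> {1..<j} \<and> cnbh E n k \<inter> C = cnbh E n j \<inter> C) in
         if cnbh E n j \<noteq> cnbh E n k
         then Some (C \<union> {Min ((cnbh E n j - cnbh E n k) \<union> (cnbh E n k - cnbh E n j))})
         else None)
      else Some C)"

fun lex_run :: "(nat \<Rightarrow> nat \<Rightarrow> bool) \<Rightarrow> nat \<Rightarrow> nat \<Rightarrow> nat set option" where
  "lex_run E n 0 = Some {}"
| "lex_run E n (Suc j) = (case lex_run E n j of None \<Rightarrow> None | Some C \<Rightarrow> lex_step E n (Suc j) C)"

definition lex_algorithm :: "(nat \<Rightarrow> nat \<Rightarrow> bool) \<Rightarrow> nat \<Rightarrow> nat set option" where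
  "lex_algorithm E n = lex_run E n n"

end

theory Submission
  imports Defs
begin

text \<open>The run of Algorithm 1 keeps the invariant that after step j the current set is an
  identifying code for the first j vertices. In each step the new vertex j + 1 is dominated and
  separated from all earlier vertices: if it has no codeword, its minimal neighbour is added,
  which cannot be the only codeword of an earlier vertex; if its trace N(j + 1) \<inter> C equals
  that of an earlier vertex k, a vertex of the symmetric difference of the two neighbourhoods is
  added, which separates j + 1 from k and, since adding codewords keeps separated vertices
  separated, from every other earlier vertex. The only way to stop is two equal closed
  neighbourhoods, i.e. twins; conversely, the identifying code returned otherwise witnesses
  twin-freeness.\<close>

definition identifies_upto :: "(nat \<Rightarrow> nat \<Rightarrow> bool) \<Rightarrow> nat \<Rightarrow> nat \<Rightarrow> nat set \<Rightarrow> bool" where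
  "identifies_upto E n j C \<longleftrightarrow> C \<subseteq> {1..n} \<and>
     (\<forall>v\<in>{1..j}. cnbh E n v \<inter> C \<noteq> {}) \<and>
     (\<forall>v\<in>{1..j}. \<forall>w\<in>{1..j}. v \<noteq> w \<longrightarrow> cnbh E n v \<inter> C \<noteq> cnbh E n w \<inter> C)"

lemma identifies_uptoD:
  assumes "identifies_upto E n j C"
  shows identifies_upto_subset: "C \<subseteq> {1..n}"
    and identifies_upto_dominates: "v \<in> {1..j} \<Longrightarrow> cnbh E n v \<inter> C \<noteq> {}"
    and identifies_upto_separates:
      "v \<in> {1..j} \<Longrightarrow> w \<in> {1..j} \<Longrightarrow> v \<noteq> w \<Longrightarrow> cnbh E n v \<inter> C \<noteq> cnbh E n w \<inter> C"
  using assms unfolding identifies_upto_def by auto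

lemma identifies_upto_0: "identifies_upto E n 0 {}"
  by (simp add: identifies_upto_def)

lemma identifies_upto_self_iff: "identifies_upto E n n C \<longleftrightarrow> identifying_code E n C"
  by (simp add: identifies_upto_def identifying_code_def)

lemma identifying_code_imp_twin_free: "identifying_code E n C \<Longrightarrow> twin_free E n"
  unfolding identifying_code_def twin_free_def by metis

lemma cnbh_subset: "v \<in> {1..n} \<Longrightarrow> cnbh E n v \<subseteq> {1..n}"
  unfolding cnbh_def by auto

lemma finite_cnbh: "finite (cnbh E n v)"
  unfolding cnbh_def by auto

lemma cnbh_self: "v \<in> cnbh E n v"
  unfolding cnbh_def by auto

lemma inter_neq_superset: "C \<subseteq> D \<Longrightarrow> A \<inter> C \<noteq> B \<inter> C \<Longrightarrow> A \<inter> D \<noteq> B \<inter> D"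
  by blast

lemma identifies_upto_Suc:
  assumes I: "identifies_upto E n j C" and "C \<subseteq> D" and "D \<subseteq> {1..n}"
    and "cnbh E n (Suc j) \<inter> D \<noteq> {}"
    and "\<And>u. u \<in> {1..j} \<Longrightarrow> cnbh E n u \<inter> D \<noteq> cnbh E n (Suc j) \<inter> D"
  shows "identifies_upto E n (Suc j) D"
proof -
  have "cnbh E n v \<inter> D \<noteq> {}" if "v \<in> {1..j}" for v
    using identifies_upto_dominates[OF I that] \<open>C \<subseteq> D\<close> by auto
  moreover have "cnbh E n v \<inter> D \<noteq> cnbh E n w \<inter> D"
    if "v \<in> {1..j}" "w \<in> {1..j}" "v \<noteq> w" for v w
    using identifies_upto_separates[OF I that] \<open>C \<subseteq> D\<close> by (rule inter_neq_superset[rotated])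
  moreover have "{1..Suc j} = insert (Suc j) {1..j}" by auto
  ultimately show ?thesis
    unfolding identifies_upto_def using assms(3-5) by (metis insert_iff)
qed

lemma lex_step_uncovered:
  assumes I: "identifies_upto E n j C" and j: "Suc j \<le> n"
    and uncovered: "cnbh E n (Suc j) \<inter> C = {}"
  shows "\<exists>D. lex_step E n (Suc j) C = Some D \<and> identifies_upto E n (Suc j) D"
proof -
  define m where "m = Min (cnbh E n (Suc j))"
  have m: "m \<in> cnbh E n (Suc j)"
    unfolding m_def using cnbh_self[of "Suc j" E n] by (intro Min_in finite_cnbh) blast
  have trace: "cnbh E n (Suc j) \<inter> (C \<union> {m}) = {m}"
    using uncovered m by blast
  have "m \<notin> C" using uncovered m by blast
  then have separated: "cnbh E n u \<inter> (C \<union> {m}) \<noteq> cnbh E n (Suc j) \<inter> (C \<union> {m})"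
    if "u \<in> {1..j}" for u
    using identifies_upto_dominates[OF I that] unfolding trace by auto
  have "C \<union> {m} \<subseteq> {1..n}"
    using identifies_upto_subset[OF I] m cnbh_subset[of "Suc j" n E] j by auto
  then have "identifies_upto E n (Suc j) (C \<union> {m})"
    by (rule identifies_upto_Suc[OF I Un_upper1 _ _ separated]) (simp add: trace m)
  moreover have "lex_step E n (Suc j) C = Some (C \<union> {m})"
    using uncovered unfolding lex_step_def m_def by simp
  ultimately show ?thesis by blast
qed

lemma lex_step_unmatched:
  assumes I: "identifies_upto E n j C"
    and covered: "cnbh E n (Suc j) \<inter> C \<noteq> {}"
    and unmatched: "\<not> (\<exists>k\<in>{1..<Suc j}. cnbh E n k \<inter> C = cnbh E n (Suc j) \<inter> C)"
  shows "lex_step E n (Suc j) C = Some C \<and> identifies_upto E n (Suc j) C"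
proof
  show "lex_step E n (Suc j) C = Some C"
    using covered unmatched unfolding lex_step_def by simp
  show "identifies_upto E n (Suc j) C"
    using identifies_upto_Suc[OF I order_refl identifies_upto_subset[OF I] covered] unmatched
    by auto
qed

lemma identifies_upto_Suc_add_sym_diff:
  assumes I: "identifies_upto E n j C" and k: "k \<in> {1..j}"
    and same_trace: "cnbh E n k \<inter> C = cnbh E n (Suc j) \<inter> C"
    and covered: "cnbh E n (Suc j) \<inter> C \<noteq> {}" and "x \<in> {1..n}"
    and x: "x \<in> (cnbh E n (Suc j) - cnbh E n k) \<union> (cnbh E n k - cnbh E n (Suc j))"
  shows "identifies_upto E n (Suc j) (C \<union> {x})"
proof (rule identifies_upto_Suc[OF I Un_upper1])
  show "C \<union> {x} \<subseteq> {1..n}" using identifies_upto_subset[OF I] \<open>x \<in> {1..n}\<close> by blast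
  show "cnbh E n (Suc j) \<inter> (C \<union> {x}) \<noteq> {}" using covered by auto
next
  fix u assume u: "u \<in> {1..j}"
  show "cnbh E n u \<inter> (C \<union> {x}) \<noteq> cnbh E n (Suc j) \<inter> (C \<union> {x})"
  proof (cases "u = k")
    case True
    show ?thesis unfolding True using x by auto
  next
    case False
    have "cnbh E n u \<inter> C \<noteq> cnbh E n (Suc j) \<inter> C"
      using identifies_upto_separates[OF I u k False] same_trace by simp
    then show ?thesis by (rule inter_neq_superset[OF Un_upper1])
  qed
qed

lemma lex_step_matched:
  assumes I: "identifies_upto E n j C" and j: "Suc j \<le> n"
    and covered: "cnbh E n (Suc j) \<inter> C \<noteq> {}"
    and matched: "\<exists>k\<in>{1..<Suc j}. cnbh E n k \<inter> C = cnbh E n (Suc j) \<inter> C"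
  shows "case lex_step E n (Suc j) C of None \<Rightarrow> \<not> twin_free E n
           | Some D \<Rightarrow> identifies_upto E n (Suc j) D"
proof -
  define N where "N = cnbh E n"
  define k where "k = (LEAST k. k \<in> {1..<Suc j} \<and> N k \<inter> C = N (Suc j) \<inter> C)"
  have "k \<in> {1..<Suc j} \<and> N k \<inter> C = N (Suc j) \<inter> C"
    unfolding k_def by (rule LeastI_ex) (use matched in \<open>auto simp: N_def\<close>)
  then have k: "k \<in> {1..j}" and same_trace: "N k \<inter> C = N (Suc j) \<inter> C" by auto
  have step: "lex_step E n (Suc j) C = (if N (Suc j) \<noteq> N k
      then Some (C \<union> {Min ((N (Suc j) - N k) \<union> (N k - N (Suc j)))}) else None)"
    using covered matched unfolding lex_step_def N_def k_def[unfolded N_def, symmetric]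
    by (simp add: Let_def)
  have kj: "k \<in> {1..n}" "Suc j \<in> {1..n}" "k \<noteq> Suc j" using k j by auto
  show ?thesis
  proof (cases "N (Suc j) = N k")
    case True
    then have "\<not> twin_free E n" using kj unfolding twin_free_def N_def by metis
    then show ?thesis using step True by simp
  next
    case False
    define x where "x = Min ((N (Suc j) - N k) \<union> (N k - N (Suc j)))"
    have x: "x \<in> (N (Suc j) - N k) \<union> (N k - N (Suc j))"
      using finite_cnbh[of E n] False unfolding x_def N_def by (intro Min_in) auto
    moreover have "x \<in> {1..n}"
      using x cnbh_subset[OF kj(1)] cnbh_subset[OF kj(2)] unfolding N_def by blast
    ultimately have "identifies_upto E n (Suc j) (C \<union> {x})"
      using identifies_upto_Suc_add_sym_diff[OF I k same_trace[unfolded N_def] covered]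
      unfolding N_def by blast
    then show ?thesis using step False unfolding x_def by simp
  qed
qed

lemma lex_step_correct:
  assumes "identifies_upto E n j C" and "Suc j \<le> n"
  shows "case lex_step E n (Suc j) C of None \<Rightarrow> \<not> twin_free E n
           | Some D \<Rightarrow> identifies_upto E n (Suc j) D"
proof (cases "cnbh E n (Suc j) \<inter> C = {}")
  case True
  then show ?thesis using lex_step_uncovered[OF assms] by auto
next
  case False
  then show ?thesis
    using lex_step_unmatched[OF assms(1)] lex_step_matched[OF assms] by fastforce
qed

lemma lex_run_correct:
  "j \<le> n \<Longrightarrow> (case lex_run E n j of None \<Rightarrow> \<not> twin_free E n
                | Some C \<Rightarrow> identifies_upto E n j C)"
proof (induction j)
  case 0
  then show ?case by (simp add: identifies_upto_0)
next
  case (Suc j)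
  then show ?case
    using lex_step_correct[of E n j] by (cases "lex_run E n j") auto
qed

theorem proposition1:
  fixes E :: "nat \<Rightarrow> nat \<Rightarrow> bool" and n :: nat
  assumes "simple_graph E"
  shows "(lex_algorithm E n = None \<longleftrightarrow> \<not> twin_free E n) \<and>
         (twin_free E n \<longrightarrow> (\<exists>C. lex_algorithm E n = Some C \<and> identifying_code E n C))"
proof (cases "lex_algorithm E n")
  case None
  then show ?thesis
    using lex_run_correct[of n n E] unfolding lex_algorithm_def by simp
next
  case (Some C)
  then have "identifying_code E n C"
    using lex_run_correct[of n n E] identifies_upto_self_iff
    unfolding lex_algorithm_def by simp
  then show ?thesis using Some by (simp add: identifying_code_imp_twin_free)
qed

end
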